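(* Let $\Lambda\in\mathbb{R}$ and let $\rho,p,q$ be smooth real functions of a real variable $z$, defined on an open interval containing $z=0$, and write $\rho_0=\rho(0)$, $p_0=p(0)$, $q_0=q(0)$. Consider the energy-momentum tensor $(T^{\mu}_{\nu})=\mathrm{diag}\{\rho(z),-p(z),-p(z),-q(z)\}$ in coordinates $(t,x,y,z)$. Assume it is generic at $z=0$, i.e. \[ q_0\neq\Lambda \quad\text{and}\quad \big[\ \rho_0\neq q_0-2\Lambda \ \text{ or } \ \rho_0+4p_0+3q_0\neq 6\Lambda\ \big], \] and fix a constant $z_S$ with \[ \frac{q_0-\Lambda}{z_S}<0 \qquad\text{and}\qquad 3z_S(\rho_0-q_0+2\Lambda)\neq \rho_0+4p_0+3q_0-6\Lambda . \] Then there is a maximal open interval $I_0$ containing $z=0$ on which the function \[ \Phi(z)=\frac{q(z)-\Lambda}{z-z_S}\cdot\frac{1}{3(z-z_S)\big(\rho(z)-q(z)+2\Lambda\big)+\rho(z)+4p(z)+3q(z)-6\Lambda} \] is well defined and $\dfrac{q(z)-\Lambda}{z-z_S}>0$. Furthermore, the metric \[ g=e^{2\int_0^z \left(3(z'-z_S)-1\right)\Phi(z')\,dz'}\,dt^2-e^{4\int_0^z\Phi(z')\,dz'}\,(dx^2+dy^2)-\frac{12\,(z-z_S)}{q(z)-\Lambda}\,\Phi(z)^2\,dz^2, \] defined for $z\in I_0$, satisfies Einstein's equations with cosmological constant $\Lambda$, \[ R^{\mu}_{\nu}-\tfrac12 R\,\delta^{\mu}_{\nu}-\Lambda\,\delta^{\mu}_{\nu}=T^{\mu}_{\nu},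 \] provided the energy-momentum tensor is conserved, $\nabla_\mu T^{\mu}_{\nu}=0$, which (for this metric) is equivalent to \[ \frac{dq}{dz}=\Big[\big(1-3(z-z_S)\big)(\rho+q)+4(p-q)\Big]\Phi . \]
   Context: Units are chosen so that $8\pi G/c^4=1$. The metric has signature $(+,-,-,-)$. The Levi-Civita connection $\Gamma$ of $g$ is used, with Riemann tensor $R^{\lambda}{}_{\mu\kappa\nu}=\partial_\kappa\Gamma^\lambda_{\nu\mu}-\partial_\nu\Gamma^\lambda_{\kappa\mu}+\Gamma^\lambda_{\kappa\sigma}\Gamma^\sigma_{\nu\mu}-\Gamma^\lambda_{\nu\sigma}\Gamma^\sigma_{\kappa\mu}$, Ricci tensor $R_{\mu\nu}=R^{\lambda}{}_{\mu\lambda\nu}$, $R^\mu_\nu=g^{\mu\alpha}R_{\alpha\nu}$, and scalar curvature $R=R^\mu_\mu$. $\nabla$ denotes the covariant derivative of $g$. *)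

theory Defs
  imports "HOL-Analysis.Analysis"
begin

text \<open>Points of spacetime are coordinate tuples \<open>nat \<Rightarrow> real\<close>, of which only the
  components 0,1,2,3 = t,x,y,z are used. Tensor components are indexed by naturals below 4.\<close>

type_synonym point = "nat \<Rightarrow> real"
type_synonym field2 = "point \<Rightarrow> nat \<Rightarrow> nat \<Rightarrow> real"

definition smooth_on :: "real set \<Rightarrow> (real \<Rightarrow> real) \<Rightarrow> bool" where
  "smooth_on J f \<longleftrightarrow> (\<forall>n. \<forall>z\<in>J. ((deriv ^^ n) f) differentiable (at z))"

definition ointegral :: "real \<Rightarrow> real \<Rightarrow> (real \<Rightarrow> real) \<Rightarrow> real" where
  "ointegral a b f = (if a \<le> b then integral {a..b} f else - integral {b..a} f)"

definition kdelta :: "nat \<Rightarrow> nat \<Rightarrow> real" where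
  "kdelta i j = (if i = j then 1 else 0)"

definition partial :: "nat \<Rightarrow> (point \<Rightarrow> real) \<Rightarrow> point \<Rightarrow> real" where
  "partial k f x = deriv (\<lambda>s. f (x(k := s))) (x k)"

definition inv_metric :: "field2 \<Rightarrow> field2" where
  "inv_metric g x = (THE h. (\<forall>i<4. \<forall>j<4. (\<Sum>k<4. g x i k * h k j) = kdelta i j)
                         \<and> (\<forall>i j. \<not> (i < 4 \<and> j < 4) \<longrightarrow> h i j = 0))"

definition christoffel :: "field2 \<Rightarrow> nat \<Rightarrow> nat \<Rightarrow> nat \<Rightarrow> point \<Rightarrow> real" where
  "christoffel g l m n x = 1/2 * (\<Sum>s<4. inv_metric g x l s *
      (partial m (\<lambda>y. g y s n) x + partial n (\<lambda>y. g y s m) x - partial s (\<lambda>y. g y m n) x))"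

text \<open>riemann g l m k n x = R^l_{m k n}(x), with the convention of the paper.\<close>
definition riemann :: "field2 \<Rightarrow> nat \<Rightarrow> nat \<Rightarrow> nat \<Rightarrow> nat \<Rightarrow> point \<Rightarrow> real" where
  "riemann g l m k n x =
     partial k (christoffel g l n m) x - partial n (christoffel g l k m) x
     + (\<Sum>s<4. christoffel g l k s x * christoffel g s n m x
              - christoffel g l n s x * christoffel g s k m x)"

definition ricci :: "field2 \<Rightarrow> nat \<Rightarrow> nat \<Rightarrow> point \<Rightarrow> real" where
  "ricci g m n x = (\<Sum>l<4. riemann g l m l n x)"

definition ricci_mixed :: "field2 \<Rightarrow> nat \<Rightarrow> nat \<Rightarrow> point \<Rightarrow> real" where
  "ricci_mixed g m n x = (\<Sum>a<4. inv_metric g x m a * ricci g a n x)"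

definition scalar_curv :: "field2 \<Rightarrow> point \<Rightarrow> real" where
  "scalar_curv g x = (\<Sum>m<4. ricci_mixed g m m x)"

definition einstein_lhs :: "field2 \<Rightarrow> real \<Rightarrow> nat \<Rightarrow> nat \<Rightarrow> point \<Rightarrow> real" where
  "einstein_lhs g \<Lambda> m n x =
     ricci_mixed g m n x - 1/2 * scalar_curv g x * kdelta m n - \<Lambda> * kdelta m n"

text \<open>Covariant divergence nabla_m T^m_n of a (1,1)-tensor field T (T y m n = T^m_n(y)).\<close>
definition cov_div :: "field2 \<Rightarrow> field2 \<Rightarrow> nat \<Rightarrow> point \<Rightarrow> real" where
  "cov_div g T n x = (\<Sum>m<4. partial m (\<lambda>y. T y m n) x)
     + (\<Sum>m<4. \<Sum>s<4. christoffel g m m s x * T x s n - christoffel g s m n x * T x m s)"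

definition Phi :: "real \<Rightarrow> (real \<Rightarrow> real) \<Rightarrow> (real \<Rightarrow> real) \<Rightarrow> (real \<Rightarrow> real) \<Rightarrow> real \<Rightarrow> real \<Rightarrow> real" where
  "Phi \<Lambda> \<rho> p q zS z = (q z - \<Lambda>) / (z - zS) *
     (1 / (3 * (z - zS) * (\<rho> z - q z + 2 * \<Lambda>) + \<rho> z + 4 * p z + 3 * q z - 6 * \<Lambda>))"

definition good_pt :: "real set \<Rightarrow> real \<Rightarrow> (real \<Rightarrow> real) \<Rightarrow> (real \<Rightarrow> real) \<Rightarrow> (real \<Rightarrow> real) \<Rightarrow> real \<Rightarrow> real \<Rightarrow> bool" where
  "good_pt J \<Lambda> \<rho> p q zS z \<longleftrightarrow> z \<in> J \<and> z \<noteq> zS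
     \<and> 3 * (z - zS) * (\<rho> z - q z + 2 * \<Lambda>) + \<rho> z + 4 * p z + 3 * q z - 6 * \<Lambda> \<noteq> 0
     \<and> (q z - \<Lambda>) / (z - zS) > 0"

definition metric :: "real \<Rightarrow> (real \<Rightarrow> real) \<Rightarrow> (real \<Rightarrow> real) \<Rightarrow> (real \<Rightarrow> real) \<Rightarrow> real \<Rightarrow> field2" where
  "metric \<Lambda> \<rho> p q zS x m n =
     (let z = x 3; \<Phi> = Phi \<Lambda> \<rho> p q zS in
      if m = 0 \<and> n = 0 then exp (2 * ointegral 0 z (\<lambda>z'. (3 * (z' - zS) - 1) * \<Phi> z'))
      else if (m = 1 \<and> n = 1) \<or> (m = 2 \<and> n = 2) then - exp (4 * ointegral 0 z \<Phi>)
      else if m = 3 \<and> n = 3 then - (12 * (z - zS) / (q z - \<Lambda>)) * (\<Phi> z)\<^sup>2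
      else 0)"

definition emt :: "(real \<Rightarrow> real) \<Rightarrow> (real \<Rightarrow> real) \<Rightarrow> (real \<Rightarrow> real) \<Rightarrow> field2" where
  "emt \<rho> p q x m n =
     (let z = x 3 in
      if m = 0 \<and> n = 0 then \<rho> z
      else if (m = 1 \<and> n = 1) \<or> (m = 2 \<and> n = 2) then - p z
      else if m = 3 \<and> n = 3 then - q z
      else 0)"

end

theory Submission
  imports Defs
begin

text \<open>The metric is diagonal with entries depending on \<open>z\<close> only, so its Christoffel symbols,
  its Ricci tensor and the divergence of a diagonal energy-momentum tensor are explicit expressions
  in \<open>g\<^sub>z\<^sub>z\<close>, \<open>g\<^sub>z\<^sub>z'\<close> and the logarithmic derivatives
  \<open>\<alpha> = (3(z - z\<^sub>S) - 1)\<Phi>\<close> and \<open>\<beta> = 2\<Phi>\<close> of \<open>g\<^sub>t\<^sub>t\<close> and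
  \<open>g\<^sub>x\<^sub>x\<close>, which the fundamental theorem of calculus provides. The divergence has a single
  non-trivial component, linear in \<open>q'\<close>, which gives the stated form of the conservation law.
  Substituting that value of \<open>q'\<close> into \<open>g\<^sub>z\<^sub>z'\<close>, the Einstein tensor becomes a rational
  expression in \<open>\<Phi>, \<Phi>', \<rho>, p, q\<close> in which \<open>\<Phi>'\<close> cancels and which reduces to
  \<open>diag(\<rho>, -p, -p, -q)\<close> by the definition of \<open>\<Phi>\<close>. The maximal interval is the connected
  component of 0 in the open set of points where \<open>\<Phi>\<close> is defined and
  \<open>(q - \<Lambda>)/(z - z\<^sub>S) > 0\<close>.\<close>

lemma sum_lessThan_4: "(\<Sum>i<(4::nat). f i) = f 0 + f 1 + f 2 + f 3"
  by (simp add: numeral_eq_Suc)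

lemma all_lessThan_4: "(\<forall>i<(4::nat). P i) \<longleftrightarrow> P 0 \<and> P 1 \<and> P 2 \<and> P 3"
  by (auto simp: numeral_eq_Suc less_Suc_eq)

definition diag_entry :: "(real \<Rightarrow> real) \<Rightarrow> (real \<Rightarrow> real) \<Rightarrow> (real \<Rightarrow> real) \<Rightarrow> nat \<Rightarrow> nat \<Rightarrow> real \<Rightarrow> real" where
  "diag_entry a b c m n =
     (if m = 0 \<and> n = 0 then a else if (m = 1 \<and> n = 1) \<or> (m = 2 \<and> n = 2) then b
      else if m = 3 \<and> n = 3 then c else (\<lambda>_. 0))"

definition diag_metric :: "(real \<Rightarrow> real) \<Rightarrow> (real \<Rightarrow> real) \<Rightarrow> (real \<Rightarrow> real) \<Rightarrow> field2" where
  "diag_metric a b c x m n = diag_entry a b c m n (x 3)"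

lemma emt_eq_diag_metric: "emt \<rho> p q = diag_metric \<rho> (\<lambda>z. - p z) (\<lambda>z. - q z)"
  by (auto simp: fun_eq_iff emt_def diag_metric_def diag_entry_def Let_def)

lemma partial_depends_on_z: "partial k (\<lambda>y. f (y 3)) x = (if k = 3 then deriv f (x 3) else 0)"
  by (auto simp: partial_def)

lemma deriv_diag_entry:
  "deriv (diag_entry a b c m n) =
     (if m = 0 \<and> n = 0 then deriv a else if (m = 1 \<and> n = 1) \<or> (m = 2 \<and> n = 2) then deriv b
      else if m = 3 \<and> n = 3 then deriv c else (\<lambda>_. 0))"
  by (auto simp: diag_entry_def)

definition diag_inverse :: "(real \<Rightarrow> real) \<Rightarrow> (real \<Rightarrow> real) \<Rightarrow> (real \<Rightarrow> real) \<Rightarrow> real \<Rightarrow> nat \<Rightarrow> nat \<Rightarrow> real" where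
  "diag_inverse a b c z i j =
     (if i = j then (if i = 0 then 1 / a z else if i = 1 \<or> i = 2 then 1 / b z else if i = 3 then 1 / c z else 0)
      else 0)"

lemma inv_metric_diag_metric:
  assumes "a (x 3) \<noteq> 0" "b (x 3) \<noteq> 0" "c (x 3) \<noteq> 0"
  shows "inv_metric (diag_metric a b c) x = diag_inverse a b c (x 3)"
  unfolding inv_metric_def
proof (rule the_equality)
  show "(\<forall>i<4. \<forall>j<4. (\<Sum>k<4. diag_metric a b c x i k * diag_inverse a b c (x 3) k j) = kdelta i j) \<and>
    (\<forall>i j. \<not> (i < 4 \<and> j < 4) \<longrightarrow> diag_inverse a b c (x 3) i j = 0)"
    using assms
    by (auto simp: all_lessThan_4 sum_lessThan_4 diag_metric_def diag_entry_def diag_inverse_def kdelta_def)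
next
  fix h
  assume h: "(\<forall>i<4. \<forall>j<4. (\<Sum>k<4. diag_metric a b c x i k * h k j) = kdelta i j) \<and>
    (\<forall>i j. \<not> (i < 4 \<and> j < 4) \<longrightarrow> h i j = 0)"
  show "h = diag_inverse a b c (x 3)"
  proof (intro ext)
    fix i j
    show "h i j = diag_inverse a b c (x 3) i j"
    proof (cases "i < 4 \<and> j < 4")
      case True
      then have "i = 0 \<or> i = 1 \<or> i = 2 \<or> i = 3" "j = 0 \<or> j = 1 \<or> j = 2 \<or> j = 3" by auto
      then show ?thesis
        using h assms
        by (auto simp: all_lessThan_4 sum_lessThan_4 diag_metric_def diag_entry_def
            diag_inverse_def kdelta_def field_simps)
    next
      case False
      then show ?thesis using h by (auto simp: diag_inverse_def)
    qed
  qed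
qed

definition diag_christoffel :: "(real \<Rightarrow> real) \<Rightarrow> (real \<Rightarrow> real) \<Rightarrow> (real \<Rightarrow> real) \<Rightarrow> nat \<Rightarrow> nat \<Rightarrow> nat \<Rightarrow> real \<Rightarrow> real" where
  "diag_christoffel a b c l m n = (\<lambda>z.
     if l = 0 \<and> ((m = 0 \<and> n = 3) \<or> (m = 3 \<and> n = 0)) then deriv a z / (2 * a z)
     else if (l = 1 \<and> ((m = 1 \<and> n = 3) \<or> (m = 3 \<and> n = 1))) \<or> (l = 2 \<and> ((m = 2 \<and> n = 3) \<or> (m = 3 \<and> n = 2)))
       then deriv b z / (2 * b z)
     else if l = 3 \<and> m = 3 \<and> n = 3 then deriv c z / (2 * c z)
     else if l = 3 \<and> m = 0 \<and> n = 0 then - deriv a z / (2 * c z)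
     else if l = 3 \<and> ((m = 1 \<and> n = 1) \<or> (m = 2 \<and> n = 2)) then - deriv b z / (2 * c z)
     else 0)"

lemma christoffel_diag_metric:
  assumes "a (x 3) \<noteq> 0" "b (x 3) \<noteq> 0" "c (x 3) \<noteq> 0"
  shows "christoffel (diag_metric a b c) l m n x = diag_christoffel a b c l m n (x 3)"
proof -
  have "l = 0 \<or> l = 1 \<or> l = 2 \<or> l = 3 \<or> l \<ge> 4" "m = 0 \<or> m = 1 \<or> m = 2 \<or> m = 3 \<or> m \<ge> 4"
    "n = 0 \<or> n = 1 \<or> n = 2 \<or> n = 3 \<or> n \<ge> 4"
    by auto
  then show ?thesis
    unfolding christoffel_def inv_metric_diag_metric[where a=a and b=b and c=c and x=x, OF assms]
      diag_metric_def partial_depends_on_z deriv_diag_entry sum_lessThan_4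
    by (auto simp: diag_inverse_def diag_christoffel_def diag_entry_def)
qed

lemma partial_christoffel_diag_metric:
  assumes U: "open U" "x 3 \<in> U" and nz: "\<And>z. z \<in> U \<Longrightarrow> a z \<noteq> 0 \<and> b z \<noteq> 0 \<and> c z \<noteq> 0"
  shows "partial k (christoffel (diag_metric a b c) l m n) x =
    (if k = 3 then deriv (diag_christoffel a b c l m n) (x 3) else 0)"
proof (cases "k = 3")
  case True
  have "\<forall>\<^sub>F s in nhds (x 3). christoffel (diag_metric a b c) l m n (x(3 := s)) = diag_christoffel a b c l m n s"
  proof (rule eventually_nhds_in_open[OF U, THEN eventually_mono])
    fix s assume "s \<in> U"
    then show "christoffel (diag_metric a b c) l m n (x(3 := s)) = diag_christoffel a b c l m n s"
      using nz[of s] christoffel_diag_metric[where a=a and b=b and c=c and x="x(3 := s)"] by simp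
  qed
  then show ?thesis using True unfolding partial_def by (auto intro!: deriv_cong_ev)
next
  case False
  then have "christoffel (diag_metric a b c) l m n (x(k := s)) = diag_christoffel a b c l m n (x 3)" for s
    using U nz by (subst christoffel_diag_metric) auto
  then show ?thesis using False unfolding partial_def by simp
qed

definition "ricci_tt a b c z = deriv (\<lambda>z. - (deriv a z / (2 * c z))) z
   + (2 * (deriv b z / (2 * b z)) + deriv c z / (2 * c z) - deriv a z / (2 * a z)) * (- (deriv a z / (2 * c z)))"
definition "ricci_xx a b c z = deriv (\<lambda>z. - (deriv b z / (2 * c z))) z
   + (deriv a z / (2 * a z) + deriv c z / (2 * c z)) * (- (deriv b z / (2 * c z)))"
definition "ricci_zz a b c z = - (deriv (\<lambda>z. deriv a z / (2 * a z)) z + 2 * deriv (\<lambda>z. deriv b z / (2 * b z)) z)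
   + (deriv a z / (2 * a z) + 2 * (deriv b z / (2 * b z))) * (deriv c z / (2 * c z))
   - (deriv a z / (2 * a z))\<^sup>2 - 2 * (deriv b z / (2 * b z))\<^sup>2"

lemma ricci_diag_metric:
  assumes U: "open U" "x 3 \<in> U" and nz: "\<And>z. z \<in> U \<Longrightarrow> a z \<noteq> 0 \<and> b z \<noteq> 0 \<and> c z \<noteq> 0"
    and mn: "m < 4" "n < 4"
  shows "ricci (diag_metric a b c) m n x =
    (if m = n then (if m = 0 then ricci_tt a b c (x 3)
     else if m = 3 then ricci_zz a b c (x 3) else ricci_xx a b c (x 3)) else 0)"
proof -
  have nzx: "a (x 3) \<noteq> 0" "b (x 3) \<noteq> 0" "c (x 3) \<noteq> 0" using U nz by auto
  have partial: "\<And>k l n m. partial k (christoffel (diag_metric a b c) l n m) x =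
      (if k = 3 then deriv (diag_christoffel a b c l n m) (x 3) else 0)"
    by (rule partial_christoffel_diag_metric[where a=a and b=b and c=c and x=x, OF U nz])
  have "m = 0 \<or> m = 1 \<or> m = 2 \<or> m = 3" "n = 0 \<or> n = 1 \<or> n = 2 \<or> n = 3" using mn by auto
  then show ?thesis
    unfolding ricci_def riemann_def partial sum_lessThan_4
      christoffel_diag_metric[where a=a and b=b and c=c and x=x, OF nzx]
    using nzx by (auto simp: diag_christoffel_def ricci_tt_def ricci_xx_def ricci_zz_def field_simps
        power2_eq_square)
qed

lemma ricci_mixed_diag_metric:
  assumes U: "open U" "x 3 \<in> U" and nz: "\<And>z. z \<in> U \<Longrightarrow> a z \<noteq> 0 \<and> b z \<noteq> 0 \<and> c z \<noteq> 0"
    and mn: "m < 4" "n < 4"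
  shows "ricci_mixed (diag_metric a b c) m n x =
    (if m = n then (if m = 0 then ricci_tt a b c (x 3) / a (x 3)
     else if m = 3 then ricci_zz a b c (x 3) / c (x 3) else ricci_xx a b c (x 3) / b (x 3)) else 0)"
proof -
  have nzx: "a (x 3) \<noteq> 0" "b (x 3) \<noteq> 0" "c (x 3) \<noteq> 0" using U nz by auto
  have "m = 0 \<or> m = 1 \<or> m = 2 \<or> m = 3" "n = 0 \<or> n = 1 \<or> n = 2 \<or> n = 3" using mn by auto
  then show ?thesis
    unfolding ricci_mixed_def inv_metric_diag_metric[where a=a and b=b and c=c and x=x, OF nzx] sum_lessThan_4
    by (auto simp: diag_inverse_def ricci_diag_metric[where a=a and b=b and c=c and x=x, OF U nz])
qed

lemma cov_div_diag_metric:
  assumes nz: "a (x 3) \<noteq> 0" "b (x 3) \<noteq> 0" "c (x 3) \<noteq> 0" and "n < 4"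
  shows "cov_div (diag_metric a b c) (diag_metric t0 t1 t3) n x =
    (if n = 3 then deriv t3 (x 3) + deriv a (x 3) / (2 * a (x 3)) * (t3 (x 3) - t0 (x 3))
       + 2 * (deriv b (x 3) / (2 * b (x 3))) * (t3 (x 3) - t1 (x 3)) else 0)"
proof -
  have "n = 0 \<or> n = 1 \<or> n = 2 \<or> n = 3" using \<open>n < 4\<close> by auto
  then show ?thesis
    unfolding cov_div_def christoffel_diag_metric[where a=a and b=b and c=c and x=x, OF nz] sum_lessThan_4
    using nz by (auto simp: diag_metric_def partial_depends_on_z deriv_diag_entry diag_christoffel_def
        diag_entry_def field_simps)
qed

lemma deriv_transform_within_open:
  assumes "open U" "z \<in> U" "\<And>w. w \<in> U \<Longrightarrow> f w = g w" "(g has_real_derivative D) (at z)"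
  shows "deriv f z = D"
  by (rule DERIV_imp_deriv, rule has_field_derivative_transform_within_open[OF assms(4) assms(1,2)])
    (use assms(3) in auto)

text \<open>Only \<open>c'\<close> enters, not \<open>c''\<close>: the second derivatives of \<open>c\<close> cancel in the
  Ricci tensor.\<close>
lemma ricci_diag_log_derivatives:
  fixes a b c \<alpha> \<beta> c' :: "real \<Rightarrow> real"
  assumes U: "open U" "z \<in> U"
    and nz: "\<And>w. w \<in> U \<Longrightarrow> a w \<noteq> 0 \<and> b w \<noteq> 0 \<and> c w \<noteq> 0"
    and Da: "\<And>w. w \<in> U \<Longrightarrow> (a has_real_derivative 2 * \<alpha> w * a w) (at w)"
    and Db: "\<And>w. w \<in> U \<Longrightarrow> (b has_real_derivative 2 * \<beta> w * b w) (at w)"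
    and Dc: "\<And>w. w \<in> U \<Longrightarrow> (c has_real_derivative c' w) (at w)"
    and D\<alpha>: "(\<alpha> has_real_derivative \<alpha>') (at z)" and D\<beta>: "(\<beta> has_real_derivative \<beta>') (at z)"
  defines "\<gamma> \<equiv> c' z / (2 * c z)"
  shows "ricci_tt a b c z / a z = - (\<alpha>' + (\<alpha> z)\<^sup>2 + 2 * \<alpha> z * \<beta> z - \<alpha> z * \<gamma>) / c z"
    and "ricci_xx a b c z / b z = - (\<beta>' + 2 * (\<beta> z)\<^sup>2 + \<alpha> z * \<beta> z - \<beta> z * \<gamma>) / c z"
    and "ricci_zz a b c z / c z = (- (\<alpha>' + 2 * \<beta>') + (\<alpha> z + 2 * \<beta> z) * \<gamma> - (\<alpha> z)\<^sup>2 - 2 * (\<beta> z)\<^sup>2) / c z"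
proof -
  have da: "deriv a w = 2 * \<alpha> w * a w" and db: "deriv b w = 2 * \<beta> w * b w"
    and dc: "deriv c w = c' w" if "w \<in> U" for w
    using DERIV_imp_deriv[OF Da[OF that]] DERIV_imp_deriv[OF Db[OF that]] DERIV_imp_deriv[OF Dc[OF that]]
    by auto
  have log_a: "deriv a w / (2 * a w) = \<alpha> w" and log_b: "deriv b w / (2 * b w) = \<beta> w"
    if "w \<in> U" for w
    using da[OF that] db[OF that] nz[OF that] by auto
  have nzz: "a z \<noteq> 0" "b z \<noteq> 0" "c z \<noteq> 0" using nz[OF U(2)] by auto
  have tt: "deriv (\<lambda>w. - (deriv a w / (2 * c w))) z
      = - ((\<alpha>' * a z + \<alpha> z * (2 * \<alpha> z * a z)) / c z - \<alpha> z * a z * c' z / (c z)\<^sup>2)"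
  proof (rule deriv_transform_within_open[OF U])
    show "- (deriv a w / (2 * c w)) = - (\<alpha> w * a w / c w)" if "w \<in> U" for w
      using log_a[OF that] nz[OF that] by (simp add: field_simps)
    show "((\<lambda>w. - (\<alpha> w * a w / c w)) has_real_derivative
        - ((\<alpha>' * a z + \<alpha> z * (2 * \<alpha> z * a z)) / c z - \<alpha> z * a z * c' z / (c z)\<^sup>2)) (at z)"
      using D\<alpha> Da[OF U(2)] Dc[OF U(2)] nzz
      by (auto intro!: derivative_eq_intros simp: field_simps power2_eq_square)
  qed
  have xx: "deriv (\<lambda>w. - (deriv b w / (2 * c w))) z
      = - ((\<beta>' * b z + \<beta> z * (2 * \<beta> z * b z)) / c z - \<beta> z * b z * c' z / (c z)\<^sup>2)"
  proof (rule deriv_transform_within_open[OF U])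
    show "- (deriv b w / (2 * c w)) = - (\<beta> w * b w / c w)" if "w \<in> U" for w
      using log_b[OF that] nz[OF that] by (simp add: field_simps)
    show "((\<lambda>w. - (\<beta> w * b w / c w)) has_real_derivative
        - ((\<beta>' * b z + \<beta> z * (2 * \<beta> z * b z)) / c z - \<beta> z * b z * c' z / (c z)\<^sup>2)) (at z)"
      using D\<beta> Db[OF U(2)] Dc[OF U(2)] nzz
      by (auto intro!: derivative_eq_intros simp: field_simps power2_eq_square)
  qed
  have zz: "deriv (\<lambda>w. deriv a w / (2 * a w)) z = \<alpha>'" "deriv (\<lambda>w. deriv b w / (2 * b w)) z = \<beta>'"
    using deriv_transform_within_open[OF U log_a D\<alpha>] deriv_transform_within_open[OF U log_b D\<beta>] by auto
  show "ricci_tt a b c z / a z = - (\<alpha>' + (\<alpha> z)\<^sup>2 + 2 * \<alpha> z * \<beta> z - \<alpha> z * \<gamma>) / c z"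
    unfolding ricci_tt_def tt da[OF U(2)] db[OF U(2)] dc[OF U(2)] \<gamma>_def
    using nzz by (simp add: field_simps power2_eq_square)
  show "ricci_xx a b c z / b z = - (\<beta>' + 2 * (\<beta> z)\<^sup>2 + \<alpha> z * \<beta> z - \<beta> z * \<gamma>) / c z"
    unfolding ricci_xx_def xx da[OF U(2)] db[OF U(2)] dc[OF U(2)] \<gamma>_def
    using nzz by (simp add: field_simps power2_eq_square)
  show "ricci_zz a b c z / c z = (- (\<alpha>' + 2 * \<beta>') + (\<alpha> z + 2 * \<beta> z) * \<gamma> - (\<alpha> z)\<^sup>2 - 2 * (\<beta> z)\<^sup>2) / c z"
    unfolding ricci_zz_def zz log_a[OF U(2)] log_b[OF U(2)] dc[OF U(2)] \<gamma>_def by simp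
qed

lemma einstein_lhs_diag_metric:
  fixes a b c \<alpha> \<beta> c' :: "real \<Rightarrow> real"
  assumes U: "open U" "x 3 \<in> U"
    and nz: "\<And>w. w \<in> U \<Longrightarrow> a w \<noteq> 0 \<and> b w \<noteq> 0 \<and> c w \<noteq> 0"
    and Da: "\<And>w. w \<in> U \<Longrightarrow> (a has_real_derivative 2 * \<alpha> w * a w) (at w)"
    and Db: "\<And>w. w \<in> U \<Longrightarrow> (b has_real_derivative 2 * \<beta> w * b w) (at w)"
    and Dc: "\<And>w. w \<in> U \<Longrightarrow> (c has_real_derivative c' w) (at w)"
    and D\<alpha>: "(\<alpha> has_real_derivative \<alpha>') (at (x 3))" and D\<beta>: "(\<beta> has_real_derivative \<beta>') (at (x 3))"
    and mn: "m < 4" "n < 4"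
  defines "z \<equiv> x 3"
  defines "\<gamma> \<equiv> c' z / (2 * c z)"
  defines "R0 \<equiv> - (\<alpha>' + (\<alpha> z)\<^sup>2 + 2 * \<alpha> z * \<beta> z - \<alpha> z * \<gamma>) / c z"
    and "R1 \<equiv> - (\<beta>' + 2 * (\<beta> z)\<^sup>2 + \<alpha> z * \<beta> z - \<beta> z * \<gamma>) / c z"
    and "R3 \<equiv> (- (\<alpha>' + 2 * \<beta>') + (\<alpha> z + 2 * \<beta> z) * \<gamma> - (\<alpha> z)\<^sup>2 - 2 * (\<beta> z)\<^sup>2) / c z"
  defines "S \<equiv> R0 + 2 * R1 + R3"
  shows "einstein_lhs (diag_metric a b c) \<Lambda> m n x =
    (if m = n then (if m = 0 then R0 - S / 2 - \<Lambda> else if m = 3 then R3 - S / 2 - \<Lambda> else R1 - S / 2 - \<Lambda>)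
     else 0)"
proof -
  note ric = ricci_diag_log_derivatives[OF U nz Da Db Dc D\<alpha> D\<beta>]
  have ricci: "ricci_mixed (diag_metric a b c) m' n' x =
      (if m' = n' then (if m' = 0 then R0 else if m' = 3 then R3 else R1) else 0)"
    if "m' < 4" "n' < 4" for m' n'
    using ricci_mixed_diag_metric[where a=a and b=b and c=c and x=x, OF U nz that]
    by (simp add: ric R0_def R1_def R3_def \<gamma>_def z_def)
  have "scalar_curv (diag_metric a b c) x = S"
    unfolding scalar_curv_def sum_lessThan_4 S_def by (simp add: ricci)
  then show ?thesis
    unfolding einstein_lhs_def using mn by (simp add: ricci kdelta_def)
qed

lemma einstein_equations_algebra:
  fixes u P P' Q' \<rho> p q \<Lambda> :: real
  defines "K \<equiv> q - \<Lambda>" and "D \<equiv> 3 * u * (\<rho> - q + 2 * \<Lambda>) + \<rho> + 4 * p + 3 * q - 6 * \<Lambda>"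
  assumes u: "u \<noteq> 0" and K: "K \<noteq> 0" and D: "D \<noteq> 0"
    and P: "P = K / u * (1 / D)" and Q': "Q' = ((1 - 3 * u) * (\<rho> + q) + 4 * (p - q)) * P"
  defines "\<alpha> \<equiv> (3 * u - 1) * P" and "\<alpha>' \<equiv> 3 * P + (3 * u - 1) * P'"
    and "\<beta> \<equiv> 2 * P" and "\<beta>' \<equiv> 2 * P'"
    and "c \<equiv> - (12 * u / K) * P\<^sup>2" and "c' \<equiv> - 12 * (P\<^sup>2 / K + 2 * u * P * P' / K - u * P\<^sup>2 * Q' / K\<^sup>2)"
  defines "\<gamma> \<equiv> c' / (2 * c)"
  defines "R0 \<equiv> - (\<alpha>' + \<alpha>\<^sup>2 + 2 * \<alpha> * \<beta> - \<alpha> * \<gamma>) / c"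
    and "R1 \<equiv> - (\<beta>' + 2 * \<beta>\<^sup>2 + \<alpha> * \<beta> - \<beta> * \<gamma>) / c"
    and "R3 \<equiv> (- (\<alpha>' + 2 * \<beta>') + (\<alpha> + 2 * \<beta>) * \<gamma> - \<alpha>\<^sup>2 - 2 * \<beta>\<^sup>2) / c"
  defines "S \<equiv> R0 + 2 * R1 + R3"
  shows "R0 - S / 2 - \<Lambda> = \<rho>" and "R1 - S / 2 - \<Lambda> = - p" and "R3 - S / 2 - \<Lambda> = - q"
proof -
  have P0: "P \<noteq> 0" using P u K D by simp
  have c0: "c \<noteq> 0" using P0 u K by (simp add: c_def)
  have K_eq: "K = P * u * D" using P u D by (simp add: field_simps)
  have \<gamma>_eq: "\<gamma> = 1 / (2 * u) - Q' / (2 * K) + P' / P"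
    unfolding \<gamma>_def c_def c'_def using u K P0 by (simp add: field_simps power2_eq_square)
  have "R0 - S / 2 - \<Lambda> = (4 * P' + 12 * P\<^sup>2 - 4 * P * \<gamma>) / c - \<Lambda>"
    unfolding S_def R0_def R1_def R3_def \<beta>_def \<beta>'_def using c0 by (simp add: field_simps power2_eq_square)
  also have "\<dots> = (12 * P\<^sup>2 - 2 * P / u + 2 * P * Q' / K) / c - \<Lambda>"
    unfolding \<gamma>_eq using P0 u K c0 by (simp add: field_simps power2_eq_square)
  also have "\<dots> = - K / u + K / (6 * u\<^sup>2 * P) - Q' / (6 * u * P) - \<Lambda>"
    unfolding c_def using P0 u K by (simp add: field_simps power2_eq_square)
  also have "\<dots> = - K / u + (D - ((1 - 3 * u) * (\<rho> + q) + 4 * (p - q))) / (6 * u) - \<Lambda>"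
  proof -
    have "K / (6 * u\<^sup>2 * P) = D / (6 * u)" using K_eq P0 u by (simp add: field_simps power2_eq_square)
    moreover have "Q' / (6 * u * P) = ((1 - 3 * u) * (\<rho> + q) + 4 * (p - q)) / (6 * u)"
      using Q' P0 u by (simp add: field_simps)
    ultimately show ?thesis by (simp add: diff_divide_distrib)
  qed
  also have "\<dots> = \<rho>"
    unfolding D_def K_def using u by (simp add: field_simps)
  finally show "R0 - S / 2 - \<Lambda> = \<rho>" .
  have "R1 - S / 2 - \<Lambda> = (\<alpha>' + \<alpha>\<^sup>2 + 2 * \<alpha> * P - \<alpha> * \<gamma> + 2 * P' - 2 * P * \<gamma> + 4 * P\<^sup>2) / c - \<Lambda>"
    unfolding S_def R0_def R1_def R3_def \<beta>_def \<beta>'_def using c0 by (simp add: field_simps power2_eq_square)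
  also have "\<dots> = (P\<^sup>2 * (9 * u\<^sup>2 + 3) + 3 * P - (3 * u + 1) * P / (2 * u) + (3 * u + 1) * P * Q' / (2 * K)) / c - \<Lambda>"
    unfolding \<gamma>_eq \<alpha>_def \<alpha>'_def using P0 u K c0 by (simp add: field_simps power2_eq_square)
  also have "\<dots> = - K * (9 * u\<^sup>2 + 3) / (12 * u) - (K / P) * (3 - (3 * u + 1) / (2 * u)) / (12 * u)
      - (3 * u + 1) * (Q' / P) / (24 * u) - \<Lambda>"
    unfolding c_def using P0 u K by (simp add: field_simps power2_eq_square)
  also have "\<dots> = - K * (9 * u\<^sup>2 + 3) / (12 * u) - (u * D) * (3 - (3 * u + 1) / (2 * u)) / (12 * u)
      - (3 * u + 1) * ((1 - 3 * u) * (\<rho> + q) + 4 * (p - q)) / (24 * u) - \<Lambda>"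
    using K_eq Q' P0 by simp
  also have "\<dots> = - p"
    unfolding D_def K_def using u by (simp add: field_simps power2_eq_square)
  finally show "R1 - S / 2 - \<Lambda> = - p" .
  have "R3 - S / 2 - \<Lambda> = ((2 * P)\<^sup>2 + 2 * \<alpha> * (2 * P)) / c - \<Lambda>"
    unfolding S_def R0_def R1_def R3_def \<beta>_def \<beta>'_def using c0 by (simp add: field_simps power2_eq_square)
  also have "\<dots> = - q"
    unfolding c_def \<alpha>_def K_def using P0 u K by (simp add: K_def field_simps power2_eq_square)
  finally show "R3 - S / 2 - \<Lambda> = - q" .
qed

lemma ointegral_has_real_derivative:
  assumes I: "open I" "is_interval I" "0 \<in> I" "z \<in> I" and f: "continuous_on I f"
  shows "((\<lambda>s. ointegral 0 s f) has_real_derivative f z) (at z)"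
proof -
  obtain e0 where e0: "e0 > 0" "ball 0 e0 \<subseteq> I" using I(1,3) openE by blast
  obtain e where e: "e > 0" "ball z e \<subseteq> I" using I(1,4) openE by blast
  define lo where "lo = min (- e0 / 2) (z - e / 2)"
  define hi where "hi = max (e0 / 2) (z + e / 2)"
  have "- e0 / 2 \<in> I" "e0 / 2 \<in> I"
    using e0 by (auto intro!: e0(2)[THEN subsetD] simp: dist_real_def)
  moreover have "z - e / 2 \<in> I" "z + e / 2 \<in> I"
    using e by (auto intro!: e(2)[THEN subsetD] simp: dist_real_def)
  ultimately have lo: "lo \<in> I" and hi: "hi \<in> I" unfolding lo_def hi_def by (simp_all add: min_def max_def)
  have sub: "{lo..hi} \<subseteq> I" using mem_is_interval_1_I[OF I(2) lo hi] by auto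
  have cf: "continuous_on {lo..hi} f" using continuous_on_subset[OF f sub] .
  have z: "z \<in> {lo<..<hi}" "0 \<in> {lo<..<hi}" unfolding lo_def hi_def using e e0 by auto
  have int: "f integrable_on {u..v}" if "lo \<le> u" "v \<le> hi" for u v
    by (rule integrable_continuous_interval) (use cf that in \<open>auto intro: continuous_on_subset\<close>)
  have eq: "ointegral 0 s f = integral {lo..s} f - integral {lo..0} f" if "s \<in> {lo<..<hi}" for s
  proof (cases "0 \<le> s")
    case True
    have "integral {lo..0} f + integral {0..s} f = integral {lo..s} f"
      by (rule Henstock_Kurzweil_Integration.integral_combine)
        (use that z True in \<open>auto simp: less_imp_le intro!: int\<close>)
    then show ?thesis using True by (simp add: ointegral_def)
  next
    case False
    have "integral {lo..s} f + integral {s..0} f = integral {lo..0} f"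
      by (rule Henstock_Kurzweil_Integration.integral_combine)
        (use that z False in \<open>auto simp: less_imp_le intro!: int\<close>)
    then show ?thesis using False by (simp add: ointegral_def)
  qed
  have "((\<lambda>s. integral {lo..s} f) has_real_derivative f z) (at z within {lo..hi})"
    using z by (intro integral_has_real_derivative cf) auto
  then have "((\<lambda>s. integral {lo..s} f) has_real_derivative f z) (at z)"
    using z by (subst (asm) at_within_interior) (auto simp: interior_atLeastAtMost_real)
  then have "((\<lambda>s. integral {lo..s} f - integral {lo..0} f) has_real_derivative f z - 0) (at z)"
    by (intro DERIV_diff DERIV_const)
  then have "((\<lambda>s. integral {lo..s} f - integral {lo..0} f) has_real_derivative f z) (at z)"
    by simp
  then show ?thesis
    by (rule has_field_derivative_transform_within_open[where S="{lo<..<hi}"]) (use z eq in auto)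
qed

lemma smooth_on_differentiable: "smooth_on J f \<Longrightarrow> z \<in> J \<Longrightarrow> f differentiable (at z)"
  unfolding smooth_on_def by (metis funpow_0)

lemma open_good_pts:
  assumes "open J" "continuous_on J \<rho>" "continuous_on J p" "continuous_on J q"
  shows "open {z. good_pt J \<Lambda> \<rho> p q zS z}"
proof -
  define D where "D z = 3 * (z - zS) * (\<rho> z - q z + 2 * \<Lambda>) + \<rho> z + 4 * p z + 3 * q z - 6 * \<Lambda>" for z
  have "continuous_on (J - {zS}) \<rho>" "continuous_on (J - {zS}) p" "continuous_on (J - {zS}) q"
    using assms(2-4) by (auto intro: continuous_on_subset)
  note cont = this
  have "open (J - {zS})" "continuous_on (J - {zS}) D"
    unfolding D_def using assms(1) by (auto intro!: continuous_intros cont)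
  then have open_D: "open ((J - {zS}) \<inter> D -` (- {0}))"
    by (intro continuous_open_preimage) auto
  have "continuous_on ((J - {zS}) \<inter> D -` (- {0})) (\<lambda>z. (q z - \<Lambda>) / (z - zS))"
    by (auto intro!: continuous_intros continuous_on_subset[OF cont(3)])
  then have "open (((J - {zS}) \<inter> D -` (- {0})) \<inter> (\<lambda>z. (q z - \<Lambda>) / (z - zS)) -` {0<..})"
    using open_D by (rule continuous_open_preimage) simp
  also have "\<dots> = {z. good_pt J \<Lambda> \<rho> p q zS z}"
    by (auto simp: good_pt_def D_def)
  finally show ?thesis .
qed

lemma good_pt_0:
  assumes "0 \<in> J" "(q 0 - \<Lambda>) / zS < 0"
    "3 * zS * (\<rho> 0 - q 0 + 2 * \<Lambda>) \<noteq> \<rho> 0 + 4 * p 0 + 3 * q 0 - 6 * \<Lambda>"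
  shows "good_pt J \<Lambda> \<rho> p q zS 0"
proof -
  have "zS \<noteq> 0" using assms(2) by auto
  moreover have "(q 0 - \<Lambda>) / (0 - zS) > 0" using assms(2) by (simp add: divide_simps split: if_splits)
  ultimately show ?thesis using assms(1,3) unfolding good_pt_def by (auto simp: algebra_simps)
qed

locale good_interval =
  fixes \<Lambda> zS :: real and \<rho> p q :: "real \<Rightarrow> real" and J I :: "real set"
  assumes open_I: "open I" and interval_I: "is_interval I" and zero_in_I: "0 \<in> I"
    and good: "\<And>z. z \<in> I \<Longrightarrow> good_pt J \<Lambda> \<rho> p q zS z"
    and smooth: "smooth_on J \<rho>" "smooth_on J p" "smooth_on J q"
begin

abbreviation "\<Phi> \<equiv> Phi \<Lambda> \<rho> p q zS"

lemma Phi_nonzero: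
  assumes "z \<in> I"
  shows "\<Phi> z \<noteq> 0" "q z \<noteq> \<Lambda>" "z \<noteq> zS"
  using good[OF assms] by (auto simp: good_pt_def Phi_def)

lemma has_derivative_q: "z \<in> I \<Longrightarrow> (q has_real_derivative deriv q z) (at z)"
  using good smooth_on_differentiable[OF smooth(3)]
  by (simp add: good_pt_def DERIV_deriv_iff_real_differentiable)

lemma has_derivative_Phi:
  assumes "z \<in> I"
  shows "(\<Phi> has_real_derivative deriv \<Phi> z) (at z)"
proof -
  have "z \<in> J" using good[OF assms] by (simp add: good_pt_def)
  then have "\<rho> differentiable (at z)" "p differentiable (at z)" "q differentiable (at z)"
    using smooth smooth_on_differentiable by blast+
  then have "\<Phi> differentiable (at z)"
    using good[OF assms] unfolding Phi_def good_pt_def by (auto intro!: derivative_intros)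
  then show ?thesis by (simp add: DERIV_deriv_iff_real_differentiable)
qed

lemma continuous_on_Phi: "continuous_on I \<Phi>"
  by (intro continuous_at_imp_continuous_on ballI DERIV_isCont[OF has_derivative_Phi])

definition "g_tt z = exp (2 * ointegral 0 z (\<lambda>z'. (3 * (z' - zS) - 1) * \<Phi> z'))"
definition "g_xx z = - exp (4 * ointegral 0 z \<Phi>)"
definition "g_zz z = - (12 * (z - zS) / (q z - \<Lambda>)) * (\<Phi> z)\<^sup>2"
definition "g_zz' z = - 12 * ((\<Phi> z)\<^sup>2 / (q z - \<Lambda>) + 2 * (z - zS) * \<Phi> z * deriv \<Phi> z / (q z - \<Lambda>)
   - (z - zS) * (\<Phi> z)\<^sup>2 * deriv q z / (q z - \<Lambda>)\<^sup>2)"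

lemma metric_eq_diag_metric: "metric \<Lambda> \<rho> p q zS = diag_metric g_tt g_xx g_zz"
  by (auto simp: fun_eq_iff metric_def diag_metric_def diag_entry_def Let_def g_tt_def g_xx_def g_zz_def)

lemma g_nonzero: "z \<in> I \<Longrightarrow> g_tt z \<noteq> 0 \<and> g_xx z \<noteq> 0 \<and> g_zz z \<noteq> 0"
  using Phi_nonzero by (simp add: g_tt_def g_xx_def g_zz_def)

lemma has_derivative_g_tt:
  assumes "z \<in> I"
  shows "(g_tt has_real_derivative 2 * ((3 * (z - zS) - 1) * \<Phi> z) * g_tt z) (at z)"
proof -
  have "continuous_on I (\<lambda>z'. (3 * (z' - zS) - 1) * \<Phi> z')"
    by (intro continuous_intros continuous_on_Phi)
  from ointegral_has_real_derivative[OF open_I interval_I zero_in_I assms this]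
  show ?thesis unfolding g_tt_def by (auto intro!: derivative_eq_intros)
qed

lemma has_derivative_g_xx:
  assumes "z \<in> I"
  shows "(g_xx has_real_derivative 2 * (2 * \<Phi> z) * g_xx z) (at z)"
  using ointegral_has_real_derivative[OF open_I interval_I zero_in_I assms continuous_on_Phi]
  unfolding g_xx_def by (auto intro!: derivative_eq_intros)

lemma has_derivative_g_zz:
  assumes "z \<in> I"
  shows "(g_zz has_real_derivative g_zz' z) (at z)"
proof -
  have generic: "((\<lambda>w. - (12 * (w - zS) / k w) * (\<Phi> w)\<^sup>2) has_real_derivative
      - 12 * ((\<Phi> z)\<^sup>2 / k z + 2 * (z - zS) * \<Phi> z * deriv \<Phi> z / k z - (z - zS) * (\<Phi> z)\<^sup>2 * k' / (k z)\<^sup>2)) (at z)"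
    if "(k has_real_derivative k') (at z)" "k z \<noteq> 0" for k k'
    using that has_derivative_Phi[OF assms]
    by (auto intro!: derivative_eq_intros simp: field_simps power2_eq_square)
  have "((\<lambda>w. q w - \<Lambda>) has_real_derivative deriv q z) (at z)"
    using has_derivative_q[OF assms] by (auto intro!: derivative_eq_intros)
  from generic[OF this] show ?thesis
    unfolding g_zz_def g_zz'_def using Phi_nonzero[OF assms] by simp
qed

lemma cov_div_metric_emt:
  assumes "x 3 \<in> I" "n < 4"
  shows "cov_div (metric \<Lambda> \<rho> p q zS) (emt \<rho> p q) n x =
    (if n = 3 then ((1 - 3 * (x 3 - zS)) * (\<rho> (x 3) + q (x 3)) + 4 * (p (x 3) - q (x 3))) * \<Phi> (x 3)
       - deriv q (x 3) else 0)"
proof -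
  have nz: "g_tt (x 3) \<noteq> 0" "g_xx (x 3) \<noteq> 0" "g_zz (x 3) \<noteq> 0" using g_nonzero[OF assms(1)] by auto
  have derivs: "deriv g_tt (x 3) = 2 * ((3 * (x 3 - zS) - 1) * \<Phi> (x 3)) * g_tt (x 3)"
    "deriv g_xx (x 3) = 2 * (2 * \<Phi> (x 3)) * g_xx (x 3)"
    "deriv (\<lambda>z. - q z) (x 3) = - deriv q (x 3)"
    using has_derivative_g_tt[OF assms(1)] has_derivative_g_xx[OF assms(1)] has_derivative_q[OF assms(1)]
    by (auto intro!: DERIV_imp_deriv derivative_eq_intros)
  show ?thesis
    unfolding metric_eq_diag_metric emt_eq_diag_metric
      cov_div_diag_metric[where a=g_tt and b=g_xx and c=g_zz and x=x, OF nz assms(2)] derivs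
    using nz by (simp add: field_simps)
qed

lemma conservation_iff:
  assumes "x 3 \<in> I"
  shows "(\<forall>n<4. cov_div (metric \<Lambda> \<rho> p q zS) (emt \<rho> p q) n x = 0) \<longleftrightarrow>
    deriv q (x 3) = ((1 - 3 * (x 3 - zS)) * (\<rho> (x 3) + q (x 3)) + 4 * (p (x 3) - q (x 3))) * \<Phi> (x 3)"
  using cov_div_metric_emt[where x=x, OF assms] by (auto simp: all_lessThan_4)

lemma einstein_equations:
  assumes x: "x 3 \<in> I"
    and conserved: "deriv q (x 3) = ((1 - 3 * (x 3 - zS)) * (\<rho> (x 3) + q (x 3)) + 4 * (p (x 3) - q (x 3))) * \<Phi> (x 3)"
    and mn: "m < 4" "n < 4"
  shows "einstein_lhs (metric \<Lambda> \<rho> p q zS) \<Lambda> m n x = emt \<rho> p q x m n"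
proof -
  define z where "z = x 3"
  have z: "z \<in> I" using x by (simp add: z_def)
  have D\<alpha>: "((\<lambda>w. (3 * (w - zS) - 1) * \<Phi> w) has_real_derivative
      3 * \<Phi> z + (3 * (z - zS) - 1) * deriv \<Phi> z) (at z)"
    and D\<beta>: "((\<lambda>w. 2 * \<Phi> w) has_real_derivative 2 * deriv \<Phi> z) (at z)"
    using has_derivative_Phi[OF z] by (auto intro!: derivative_eq_intros)
  note lhs = einstein_lhs_diag_metric[where \<alpha>="\<lambda>w. (3 * (w - zS) - 1) * \<Phi> w" and \<beta>="\<lambda>w. 2 * \<Phi> w"
      and a=g_tt and b=g_xx and c=g_zz and c'=g_zz' and x=x and U=I,
      OF open_I x g_nonzero has_derivative_g_tt has_derivative_g_xx has_derivative_g_zz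
      D\<alpha>[unfolded z_def] D\<beta>[unfolded z_def] mn, folded z_def]
  have u: "z - zS \<noteq> 0" and K: "q z - \<Lambda> \<noteq> 0" using Phi_nonzero[OF z] by auto
  have D: "3 * (z - zS) * (\<rho> z - q z + 2 * \<Lambda>) + \<rho> z + 4 * p z + 3 * q z - 6 * \<Lambda> \<noteq> 0"
    using good[OF z] by (simp add: good_pt_def)
  have P: "\<Phi> z = (q z - \<Lambda>) / (z - zS)
      * (1 / (3 * (z - zS) * (\<rho> z - q z + 2 * \<Lambda>) + \<rho> z + 4 * p z + 3 * q z - 6 * \<Lambda>))"
    by (simp add: Phi_def)
  have Q': "deriv q z = ((1 - 3 * (z - zS)) * (\<rho> z + q z) + 4 * (p z - q z)) * \<Phi> z"
    using conserved by (simp add: z_def)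
  note rhs = einstein_equations_algebra[OF u K D P Q', where P'="deriv \<Phi> z"]
  have "einstein_lhs (metric \<Lambda> \<rho> p q zS) \<Lambda> m n x =
      (if m = n then (if m = 0 then \<rho> z else if m = 3 then - q z else - p z) else 0)"
    unfolding metric_eq_diag_metric
    by (subst lhs) (simp_all only: g_zz_def g_zz'_def rhs)
  moreover have "m = 0 \<or> m = 1 \<or> m = 2 \<or> m = 3" "n = 0 \<or> n = 1 \<or> n = 2 \<or> n = 3"
    using mn by auto
  ultimately show ?thesis by (auto simp: emt_def z_def)
qed

end

theorem theorem1:
  fixes \<Lambda> zS :: real and \<rho> p q :: "real \<Rightarrow> real" and J :: "real set"
  assumes J: "open J" "is_interval J" "0 \<in> J"
    and smooth: "smooth_on J \<rho>" "smooth_on J p" "smooth_on J q"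
    and generic: "q 0 \<noteq> \<Lambda>"
      "\<rho> 0 \<noteq> q 0 - 2 * \<Lambda> \<or> \<rho> 0 + 4 * p 0 + 3 * q 0 \<noteq> 6 * \<Lambda>"
    and zS: "(q 0 - \<Lambda>) / zS < 0"
      "3 * zS * (\<rho> 0 - q 0 + 2 * \<Lambda>) \<noteq> \<rho> 0 + 4 * p 0 + 3 * q 0 - 6 * \<Lambda>"
  shows "\<exists>I0. open I0 \<and> is_interval I0 \<and> 0 \<in> I0
     \<and> (\<forall>z\<in>I0. good_pt J \<Lambda> \<rho> p q zS z)
     \<and> (\<forall>I. open I \<and> is_interval I \<and> 0 \<in> I \<and> (\<forall>z\<in>I. good_pt J \<Lambda> \<rho> p q zS z) \<longrightarrow> I \<subseteq> I0)
     \<and> (\<forall>x. x 3 \<in> I0 \<longrightarrow>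
          ((\<forall>n<4. cov_div (metric \<Lambda> \<rho> p q zS) (emt \<rho> p q) n x = 0)
           \<longleftrightarrow> deriv q (x 3) = ((1 - 3 * (x 3 - zS)) * (\<rho> (x 3) + q (x 3)) + 4 * (p (x 3) - q (x 3)))
                                 * Phi \<Lambda> \<rho> p q zS (x 3)))
     \<and> ((\<forall>x. x 3 \<in> I0 \<longrightarrow> (\<forall>n<4. cov_div (metric \<Lambda> \<rho> p q zS) (emt \<rho> p q) n x = 0))
        \<longrightarrow> (\<forall>x. x 3 \<in> I0 \<longrightarrow> (\<forall>m<4. \<forall>n<4.
              einstein_lhs (metric \<Lambda> \<rho> p q zS) \<Lambda> m n x = emt \<rho> p q x m n)))"
proof -
  define I0 where "I0 = connected_component_set {z. good_pt J \<Lambda> \<rho> p q zS z} 0"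
  have "continuous_on J f" if "smooth_on J f" for f
    using smooth_on_differentiable[OF that]
    by (intro continuous_at_imp_continuous_on ballI differentiable_imp_continuous_within) auto
  then have "open {z. good_pt J \<Lambda> \<rho> p q zS z}"
    using open_good_pts[OF J(1)] smooth by blast
  moreover have "good_pt J \<Lambda> \<rho> p q zS 0" using J(3) zS by (rule good_pt_0)
  ultimately have I0: "open I0" "is_interval I0" "0 \<in> I0" "\<forall>z\<in>I0. good_pt J \<Lambda> \<rho> p q zS z"
    unfolding I0_def
    by (auto simp: open_connected_component is_interval_connected_1 dest: connected_component_in)
  have maximal: "I \<subseteq> I0" if "open I \<and> is_interval I \<and> 0 \<in> I \<and> (\<forall>z\<in>I. good_pt J \<Lambda> \<rho> p q zS z)" for I
    unfolding I0_def using that by (intro connected_component_maximal) (auto simp: is_interval_connected_1)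
  interpret good_interval \<Lambda> zS \<rho> p q J I0
    using I0 smooth by unfold_locales auto
  show ?thesis
  proof (intro exI[of _ I0] conjI allI impI ballI)
    show "open I0" "is_interval I0" "0 \<in> I0" using I0 by auto
  next
    fix z assume "z \<in> I0"
    then show "good_pt J \<Lambda> \<rho> p q zS z" using I0 by auto
  qed (use maximal conservation_iff einstein_equations in auto)
qed

end
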